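(* Let $\mathbb{R}^n$ be endowed with the $\ell_1$ norm and $\mathbb{R}^m$ with the Euclidean norm $\|\cdot\|_2$. Let $f(u)=\frac12\langle Qu,u\rangle+\langle b,u\rangle$ with $b\in\mathbb{R}^m$ and $Q\in\mathbb{R}^{m\times m}$ symmetric positive definite. Then for every $A\in\mathbb{R}^{m\times n}$ with at least two different columns, \[ L_{f,A}=\frac{\mathrm{diam}(Q^{1/2}A)^2}{4},\qquad \mu_{f,A}=\frac{\Phi(Q^{1/2}A)^2}{4}, \] and in particular $\dfrac{L_{f,A}}{\mu_{f,A}}=\dfrac{\mathrm{diam}(Q^{1/2}A)^2}{\Phi(Q^{1/2}A)^2}$.
   Context: $\Delta_{n-1}=\{x\in\mathbb{R}^n_+ : \sum_i x_i=1\}$. A matrix $A\in\mathbb{R}^{m\times n}$ is also identified with the set of its columns; $\mathrm{conv}(A)=\{Ax:x\in\Delta_{n-1}\}$. For $u\in\mathrm{conv}(A)$, $Z(u)=\{z\in\Delta_{n-1}:Az=u\}$ and $\mathrm{dist}(x,Z(u))=\min_{z\in Z(u)}\|x-z\|_1$. For a differentiable convex $f$ with $\mathrm{conv}(A)\subseteq\mathrm{dom}(f)$ and $A$ having at least two different columns, the relative smoothness and strong convexity constants are \[ L_{f,A}=\sup_{u\in\mathrm{conv}(A),\,x\in\Delta_{n-1}\setminus Z(u)}\frac{2(f(Ax)-f(u)-\langle\nabla f(u),Ax-u\rangle)}{\mathrm{dist}(x,Z(u))^2}, \] and $\mu_{f,A}$ is the same expression with $\inf$ in place of $\sup$. For a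 matrix $B$ (set of columns), $\mathrm{diam}(B)=\sup_{u,w\in B}\|u-w\|_2$, and the facial distance is $\Phi(B)=\min\{\mathrm{dist}(F,\mathrm{conv}(B\setminus F)): F\text{ a face of }\mathrm{conv}(B),\ \emptyset\ne F\ne\mathrm{conv}(B)\}$, where $B\setminus F$ denotes the columns of $B$ not in $F$ and $\mathrm{dist}(F,G)=\inf_{u\in F,w\in G}\|u-w\|_2$. *)

theory Defs
  imports "HOL-Analysis.Analysis"
begin

definition stdsimplex :: "(real^'n) set" where
  "stdsimplex = {x. (\<forall>i. 0 \<le> x $ i) \<and> (\<Sum>i\<in>UNIV. x $ i) = 1}"

definition mconv :: "real^'n^'m \<Rightarrow> (real^'m) set" where
  "mconv A = {A *v x | x. x \<in> stdsimplex}"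

definition Zset :: "real^'n^'m \<Rightarrow> real^'m \<Rightarrow> (real^'n) set" where
  "Zset A u = {z \<in> stdsimplex. A *v z = u}"

definition l1norm :: "real^'n \<Rightarrow> real" where
  "l1norm x = (\<Sum>i\<in>UNIV. \<bar>x $ i\<bar>)"

definition l1dist :: "real^'n \<Rightarrow> (real^'n) set \<Rightarrow> real" where
  "l1dist x S = Inf {l1norm (x - z) | z. z \<in> S}"

text \<open>Bregman-type ratio appearing in L_{f,A} and mu_{f,A}; the gradient
  pairing is the Frechet derivative of f at u applied to Ax - u.\<close>
definition ratio_set :: "(real^'m \<Rightarrow> real) \<Rightarrow> real^'n^'m \<Rightarrow> real set" where
  "ratio_set f A = {2 * (f (A *v x) - f u - frechet_derivative f (at u) (A *v x - u))
                        / (l1dist x (Zset A u))^2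
                    | u x. u \<in> mconv A \<and> x \<in> stdsimplex - Zset A u}"

definition Lrel :: "(real^'m \<Rightarrow> real) \<Rightarrow> real^'n^'m \<Rightarrow> real" where
  "Lrel f A = Sup (ratio_set f A)"

definition murel :: "(real^'m \<Rightarrow> real) \<Rightarrow> real^'n^'m \<Rightarrow> real" where
  "murel f A = Inf (ratio_set f A)"

definition mdiam :: "real^'n^'m \<Rightarrow> real" where
  "mdiam B = diameter (columns B)"

definition facial_distance :: "real^'n^'m \<Rightarrow> real" where
  "facial_distance B = Inf {setdist F (convex hull {c \<in> columns B. c \<notin> F})
      | F. F face_of mconv B \<and> F \<noteq> {} \<and> F \<noteq> mconv B}"

definition sym_pos_def :: "real^'m^'m \<Rightarrow> bool" where
  "sym_pos_def Q \<longleftrightarrow> transpose Q = Q \<and> (\<forall>x. x \<noteq> 0 \<longrightarrow> (Q *v x) \<bullet> x > 0)"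

definition msqrt :: "real^'m^'m \<Rightarrow> real^'m^'m" where
  "msqrt Q = (THE S. transpose S = S \<and> (\<forall>x. 0 \<le> (S *v x) \<bullet> x) \<and> S ** S = Q)"

end

theory Submission
  imports Defs
begin

text \<open>Let \<open>S = Q\<^sup>1\<^sup>/\<^sup>2\<close>. The Bregman divergence of \<open>f\<close> is \<open>\<parallel>S(\<cdot>)\<parallel>\<^sup>2 / 2\<close> and \<open>S\<close> is injective,
  so the ratio set of \<open>(f, A)\<close> is that of \<open>\<parallel>\<cdot>\<parallel>\<^sup>2 / 2\<close> with respect to \<open>B = S A\<close>. Given \<open>x \<notin> Z(w)\<close>
  and an \<open>\<ell>\<^sub>1\<close>-nearest point \<open>z \<in> Z(w)\<close>, write \<open>x - z = t (a - b)\<close> with \<open>a, b\<close> in the simplex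
  and \<open>\<parallel>x - z\<parallel>\<^sub>1 = 2 t\<close>; the ratio is then \<open>\<parallel>B a - B b\<parallel>\<^sup>2 / 4\<close>, at most \<open>diam(B)\<^sup>2 / 4\<close>, with
  equality at two farthest vertices. No column in the support of \<open>a\<close> lies in the smallest face \<open>F\<close>
  of \<open>conv(B)\<close> containing \<open>B b\<close>, as otherwise \<open>z\<close> could be moved closer to \<open>x\<close>; hence
  \<open>\<parallel>B a - B b\<parallel> \<ge> dist(F, conv(B \ F))\<close>. Conversely a pair of nearest points of \<open>F\<close> and
  \<open>conv(B \ F)\<close> realises the ratio \<open>dist(F, conv(B \ F))\<^sup>2 / 4\<close>.\<close>

section \<open>The square root of a symmetric positive definite matrix\<close>

lemma symmetric_matrix_inner_commute:
  fixes Q :: "real^'n^'n"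
  assumes "transpose Q = Q"
  shows "(Q *v x) \<bullet> y = x \<bullet> (Q *v y)"
  by (metis assms dot_lmul_matrix vector_transpose_matrix)

lemma linear_coeff_eq_0_if_quadratic_nonneg:
  fixes a c :: real
  assumes "\<And>t. 0 \<le> 2*t*a + t^2*c"
  shows "a = 0"
proof -
  have c: "0 \<le> c" using assms[of 1] assms[of "-1"] by simp
  define t where "t = - a / (c+1)"
  have "0 \<le> (2*t*a + t^2*c) * (c+1)^2" using assms[of t] c by simp
  also have "(2*t*a + t^2*c) * (c+1)^2 = 2*a*(t*(c+1))*(c+1) + (t*(c+1))^2*c"
    by (simp add: algebra_simps power2_eq_square)
  also have "t*(c+1) = -a" using c by (simp add: t_def)
  also have "2*a*(-a)*(c+1) + (-a)^2*c = - (a^2) * (c + 2)"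
    by (simp add: algebra_simps power2_eq_square)
  finally have "a^2 * (c+2) \<le> 0" by simp
  moreover have "0 \<le> a^2 * (c+2)" using c by simp
  ultimately show ?thesis using c by (simp add: mult_le_0_iff)
qed

lemma rayleigh_quotient_max_attained:
  fixes Q :: "real^'n^'n"
  assumes V: "subspace V" and x0: "x0 \<in> V" "x0 \<noteq> 0"
  obtains v where "v \<in> V" "norm v = 1" "\<And>y. y \<in> V \<Longrightarrow> (Q *v y) \<bullet> y \<le> ((Q *v v) \<bullet> v) * (y \<bullet> y)"
proof -
  define K where "K = V \<inter> sphere 0 1"
  have "compact K" unfolding K_def using closed_subspace[OF V] compact_sphere
    by (simp add: closed_Int_compact)
  moreover have "x0 /\<^sub>R norm x0 \<in> K" using x0 V by (simp add: K_def subspace_scale)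
  moreover have "continuous_on K (\<lambda>x. (Q *v x) \<bullet> x)" by (intro continuous_intros)
  ultimately obtain v where v: "v \<in> K" and vmax: "\<And>y. y \<in> K \<Longrightarrow> (Q *v y) \<bullet> y \<le> (Q *v v) \<bullet> v"
    using continuous_attains_sup[of K] by blast
  have "(Q *v y) \<bullet> y \<le> ((Q *v v) \<bullet> v) * (y \<bullet> y)" if "y \<in> V" for y
  proof (cases "y = 0")
    case False
    have "y /\<^sub>R norm y \<in> K" using that False V by (simp add: K_def subspace_scale)
    hence "(Q *v (y /\<^sub>R norm y)) \<bullet> (y /\<^sub>R norm y) \<le> (Q *v v) \<bullet> v" by (rule vmax)
    moreover have "(Q *v (y /\<^sub>R norm y)) \<bullet> (y /\<^sub>R norm y) = ((Q *v y) \<bullet> y) / (norm y)^2"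
      by (simp add: matrix_vector_mult_scaleR power2_eq_square divide_inverse)
    ultimately show ?thesis using False by (simp add: divide_le_eq mult.commute power2_norm_eq_inner)
  qed simp
  thus thesis using that v by (auto simp: K_def)
qed

text \<open>Perturbing \<open>v\<close> inside \<open>V\<close> cannot increase the Rayleigh quotient, which forces
  \<open>Q v - (Q v \<bullet> v) v \<in> V\<close> to be orthogonal to \<open>V\<close>.\<close>

lemma rayleigh_quotient_maximiser_eigenvector:
  fixes Q :: "real^'n^'n"
  assumes sym: "transpose Q = Q" and V: "subspace V" and inv: "\<And>x. x \<in> V \<Longrightarrow> Q *v x \<in> V"
    and v: "v \<in> V" "norm v = 1"
    and max: "\<And>y. y \<in> V \<Longrightarrow> (Q *v y) \<bullet> y \<le> ((Q *v v) \<bullet> v) * (y \<bullet> y)"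
  shows "Q *v v = ((Q *v v) \<bullet> v) *\<^sub>R v"
proof -
  define l where "l = (Q *v v) \<bullet> v"
  define M where "M = (\<lambda>y. l *\<^sub>R y - Q *v y)"
  have vv: "v \<bullet> v = 1" using v by (simp add: dot_square_norm)
  have orth: "M v \<bullet> z = 0" if "z \<in> V" for z
  proof (rule linear_coeff_eq_0_if_quadratic_nonneg)
    fix t :: real
    have "v + t *\<^sub>R z \<in> V" using v that V by (simp add: subspace_add subspace_scale)
    from max[OF this] have "0 \<le> l * ((v + t *\<^sub>R z) \<bullet> (v + t *\<^sub>R z)) - (Q *v (v + t *\<^sub>R z)) \<bullet> (v + t *\<^sub>R z)"
      by (simp add: l_def)
    also have "\<dots> = 2*t*(M v \<bullet> z) + t^2*(M z \<bullet> z)"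
      using symmetric_matrix_inner_commute[OF sym, of z v] vv l_def
      by (simp add: M_def matrix_vector_right_distrib matrix_vector_mult_scaleR inner_add_left
          inner_add_right inner_diff_left algebra_simps inner_commute power2_eq_square)
    finally show "0 \<le> 2*t*(M v \<bullet> z) + t^2*(M z \<bullet> z)" .
  qed
  have "M v \<in> V" using v inv V by (simp add: M_def subspace_diff subspace_scale)
  from orth[OF this] show ?thesis by (simp add: M_def l_def)
qed

definition orthonormal_eigenvectors :: "real^'n^'n \<Rightarrow> (real^'n) set \<Rightarrow> bool" where
  "orthonormal_eigenvectors Q E \<longleftrightarrow>
     finite E \<and> pairwise orthogonal E \<and> (\<forall>e\<in>E. norm e = 1 \<and> (\<exists>l. Q *v e = l *\<^sub>R e))"

lemma orthonormal_eigenvectors_card_le: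
  fixes Q :: "real^'n^'n"
  assumes "orthonormal_eigenvectors Q E"
  shows "card E \<le> CARD('n)"
proof -
  have "0 \<notin> E" using assms by (auto simp: orthonormal_eigenvectors_def)
  hence "independent E"
    using assms by (simp add: orthonormal_eigenvectors_def pairwise_orthogonal_independent)
  from independent_bound[OF this] show ?thesis by simp
qed

text \<open>A maximal orthonormal set of eigenvectors spans: otherwise its orthogonal complement is
  a nonzero invariant subspace, which contains a further unit eigenvector.\<close>

lemma symmetric_matrix_orthonormal_eigenbasis:
  fixes Q :: "real^'n^'n"
  assumes sym: "transpose Q = Q"
  obtains E where "orthonormal_eigenvectors Q E" "span E = UNIV"
proof -
  have "orthonormal_eigenvectors Q {}" by (simp add: orthonormal_eigenvectors_def)
  then obtain E where E: "orthonormal_eigenvectors Q E"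
    and Emax: "\<And>E'. orthonormal_eigenvectors Q E' \<Longrightarrow> card E' \<le> card E"
    using ex_has_greatest_nat[of "orthonormal_eigenvectors Q" "{}" card "Suc CARD('n)"]
      orthonormal_eigenvectors_card_le le_imp_less_Suc by blast
  have "span E = UNIV"
  proof (rule ccontr)
    assume "span E \<noteq> UNIV"
    then obtain a where a: "a \<noteq> 0" "\<And>x. x \<in> span E \<Longrightarrow> a \<bullet> x = 0"
      using span_not_UNIV_orthogonal by blast
    define V where "V = {x. \<forall>e\<in>E. e \<bullet> x = 0}"
    have V: "subspace V" unfolding subspace_def V_def by (auto simp: inner_add_right)
    have inv: "Q *v x \<in> V" if "x \<in> V" for x
    proof -
      have "e \<bullet> (Q *v x) = 0" if "e \<in> E" for e
      proof -
        obtain l where "Q *v e = l *\<^sub>R e" using E \<open>e \<in> E\<close> by (auto simp: orthonormal_eigenvectors_def)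
        thus ?thesis using symmetric_matrix_inner_commute[OF sym, of e x] \<open>x \<in> V\<close> \<open>e \<in> E\<close>
          by (simp add: V_def)
      qed
      thus ?thesis by (simp add: V_def)
    qed
    have "a \<in> V" using a(2) by (auto simp: V_def span_base inner_commute)
    then obtain v where v: "v \<in> V" "norm v = 1"
      "\<And>y. y \<in> V \<Longrightarrow> (Q *v y) \<bullet> y \<le> ((Q *v v) \<bullet> v) * (y \<bullet> y)"
      using rayleigh_quotient_max_attained[OF V _ a(1)] by blast
    have Qv: "Q *v v = ((Q *v v) \<bullet> v) *\<^sub>R v"
      using rayleigh_quotient_maximiser_eigenvector[OF sym V inv v] .
    have vE: "v \<notin> E" using v(1,2) by (auto simp: V_def)
    have "orthonormal_eigenvectors Q (insert v E)"
      using E v Qv unfolding orthonormal_eigenvectors_def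
      by (auto simp: pairwise_insert orthogonal_def V_def inner_commute)
    from Emax[OF this] E vE show False by (simp add: orthonormal_eigenvectors_def)
  qed
  with E that show thesis by blast
qed

lemma sym_pos_def_eigenbasis:
  fixes Q :: "real^'n^'n"
  assumes "sym_pos_def Q"
  obtains E lam where "finite E" "pairwise orthogonal E" "\<And>e. e \<in> E \<Longrightarrow> norm e = 1"
    "span E = UNIV" "\<And>e. e \<in> E \<Longrightarrow> Q *v e = lam e *\<^sub>R e \<and> 0 < lam e"
proof -
  have sym: "transpose Q = Q" and pos: "\<And>x. x \<noteq> 0 \<Longrightarrow> (Q *v x) \<bullet> x > 0"
    using assms by (auto simp: sym_pos_def_def)
  obtain E where E: "orthonormal_eigenvectors Q E" "span E = UNIV"
    using symmetric_matrix_orthonormal_eigenbasis[OF sym] by blast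
  have "Q *v e = ((Q *v e) \<bullet> e) *\<^sub>R e \<and> 0 < (Q *v e) \<bullet> e" if "e \<in> E" for e
  proof -
    have n: "norm e = 1" and "\<exists>l. Q *v e = l *\<^sub>R e"
      using E that by (auto simp: orthonormal_eigenvectors_def)
    then obtain l where l: "Q *v e = l *\<^sub>R e" by blast
    have "e \<noteq> 0" using n by auto
    thus ?thesis using pos[of e] n by (simp add: l dot_square_norm)
  qed
  with E show thesis
    by (intro that[of E "\<lambda>e. (Q *v e) \<bullet> e"]) (auto simp: orthonormal_eigenvectors_def)
qed

lemma matrix_eq_on_spanning_set:
  fixes A B :: "real^'n^'m"
  assumes "span E = UNIV" "\<And>e. e \<in> E \<Longrightarrow> A *v e = B *v e"
  shows "A = B"
  unfolding matrix_eq
  using linear_eq_on_span[OF matrix_vector_mul_linear matrix_vector_mul_linear] assms by blast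

lemma psd_square_root_on_eigenvector:
  fixes T Q :: "real^'n^'n"
  assumes psd: "\<And>x. 0 \<le> (T *v x) \<bullet> x" and TT: "T ** T = Q"
    and e: "Q *v e = l *\<^sub>R e" and l: "0 < l"
  shows "T *v e = sqrt l *\<^sub>R e"
proof -
  define s where "s = sqrt l"
  define y where "y = T *v e - s *\<^sub>R e"
  have "T *v y = T *v (T *v e) - s *\<^sub>R (T *v e)"
    by (simp add: y_def matrix_vector_mult_diff_distrib matrix_vector_mult_scaleR)
  also have "T *v (T *v e) = (s * s) *\<^sub>R e"
    using TT e l by (simp add: matrix_vector_mul_assoc s_def)
  finally have "T *v y = - s *\<^sub>R y" by (simp add: y_def algebra_simps)
  hence "s * (y \<bullet> y) \<le> 0" using psd[of y] by simp
  hence "y \<bullet> y \<le> 0" using l by (simp add: s_def mult_le_0_iff)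
  hence "y = 0" using inner_ge_zero[of y] by simp
  thus ?thesis by (simp add: y_def s_def)
qed

text \<open>Writing \<open>Q = \<Sum> \<lambda>\<^sub>e e e\<^sup>T\<close> over an orthonormal eigenbasis, the square root is
  \<open>\<Sum> sqrt \<lambda>\<^sub>e e e\<^sup>T\<close>; any other candidate agrees with it on the eigenbasis.\<close>

lemma sym_pos_def_ex1_sqrt:
  fixes Q :: "real^'n^'n"
  assumes "sym_pos_def Q"
  shows "\<exists>!S. transpose S = S \<and> (\<forall>x. 0 \<le> (S *v x) \<bullet> x) \<and> S ** S = Q"
proof -
  obtain E lam where E: "finite E" "pairwise orthogonal E" "\<And>e. e \<in> E \<Longrightarrow> norm e = 1"
    "span E = UNIV" and Qe: "\<And>e. e \<in> E \<Longrightarrow> Q *v e = lam e *\<^sub>R e \<and> 0 < lam e"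
    using sym_pos_def_eigenbasis[OF assms] by blast
  define S :: "real^'n^'n" where "S = (\<chi> i j. \<Sum>e\<in>E. sqrt (lam e) * e$i * e$j)"
  have Sx: "S *v x = (\<Sum>e\<in>E. (sqrt (lam e) * (e \<bullet> x)) *\<^sub>R e)" for x
  proof -
    have "(S *v x)$i = (\<Sum>j\<in>UNIV. \<Sum>e\<in>E. sqrt (lam e) * e$i * e$j * x$j)" for i
      by (simp add: S_def matrix_vector_mult_def sum_distrib_right)
    also have "\<dots> i = (\<Sum>e\<in>E. \<Sum>j\<in>UNIV. sqrt (lam e) * e$i * e$j * x$j)" for i
      by (rule sum.swap)
    finally show ?thesis by (simp add: vec_eq_iff sum_component inner_vec_def sum_distrib_left mult_ac)
  qed
  have Se: "S *v e = sqrt (lam e) *\<^sub>R e" if "e \<in> E" for e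
  proof -
    have "e' \<bullet> e = (if e' = e then 1 else 0)" if "e' \<in> E" for e'
      using E(2,3) \<open>e \<in> E\<close> that by (auto simp: pairwise_def orthogonal_def dot_square_norm)
    hence "S *v e = (\<Sum>e'\<in>E. if e' = e then sqrt (lam e') *\<^sub>R e' else 0)"
      unfolding Sx by (intro sum.cong) auto
    thus ?thesis using E(1) \<open>e \<in> E\<close> by simp
  qed
  have eq_S: "T = S" if "\<And>e. e \<in> E \<Longrightarrow> T *v e = sqrt (lam e) *\<^sub>R e" for T :: "real^'n^'n"
    by (rule matrix_eq_on_spanning_set[OF E(4)]) (simp add: that Se)
  have "transpose S = S" by (simp add: S_def transpose_def vec_eq_iff mult_ac)
  moreover have "0 \<le> (S *v x) \<bullet> x" for x
  proof -
    have "(S *v x) \<bullet> x = (\<Sum>e\<in>E. sqrt (lam e) * (e \<bullet> x)^2)"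
      by (simp add: Sx inner_sum_left mult_ac power2_eq_square)
    thus ?thesis using Qe by (auto intro!: sum_nonneg simp: less_imp_le)
  qed
  moreover have "S ** S = Q"
  proof (rule matrix_eq_on_spanning_set[OF E(4)])
    fix e assume "e \<in> E"
    with Qe Se show "(S ** S) *v e = Q *v e"
      by (simp add: matrix_vector_mul_assoc[symmetric] matrix_vector_mult_scaleR less_imp_le)
  qed
  moreover have "T = S" if "\<forall>x. 0 \<le> (T *v x) \<bullet> x" "T ** T = Q" for T
    using that Qe by (intro eq_S psd_square_root_on_eigenvector) auto
  ultimately show ?thesis by blast
qed

lemma msqrt_sym_pos_def:
  fixes Q :: "real^'n^'n"
  assumes "sym_pos_def Q"
  shows "transpose (msqrt Q) = msqrt Q" "msqrt Q ** msqrt Q = Q"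
  using theI'[OF sym_pos_def_ex1_sqrt[OF assms]] by (simp_all add: msqrt_def)

section \<open>The standard simplex and the convex hull of the columns\<close>

lemma stdsimplex_nonneg: "x \<in> stdsimplex \<Longrightarrow> 0 \<le> x$i"
  by (simp add: stdsimplex_def)

lemma stdsimplex_sum: "x \<in> stdsimplex \<Longrightarrow> (\<Sum>i\<in>UNIV. x$i) = 1"
  by (simp add: stdsimplex_def)

lemma stdsimplexI: "(\<And>i. 0 \<le> x$i) \<Longrightarrow> (\<Sum>i\<in>UNIV. x$i) = 1 \<Longrightarrow> x \<in> stdsimplex"
  by (simp add: stdsimplex_def)

lemma axis_in_stdsimplex: "(axis i 1 :: real^'n) \<in> stdsimplex"
  by (simp add: stdsimplex_def axis_def)

lemma convex_stdsimplex: "convex (stdsimplex :: (real^'n) set)"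
proof (rule convexI)
  fix x y :: "real^'n" and u v :: real
  assume x: "x \<in> stdsimplex" and y: "y \<in> stdsimplex" and uv: "0 \<le> u" "0 \<le> v" "u + v = 1"
  show "u *\<^sub>R x + v *\<^sub>R y \<in> stdsimplex"
  proof (rule stdsimplexI)
    fix i show "0 \<le> (u *\<^sub>R x + v *\<^sub>R y) $ i"
      using stdsimplex_nonneg[OF x, of i] stdsimplex_nonneg[OF y, of i] uv by simp
  next
    show "(\<Sum>i\<in>UNIV. (u *\<^sub>R x + v *\<^sub>R y) $ i) = 1"
      using stdsimplex_sum[OF x] stdsimplex_sum[OF y] uv
      by (simp add: sum.distrib sum_distrib_left[symmetric])
  qed
qed

lemma compact_stdsimplex: "compact (stdsimplex :: (real^'n) set)"
proof -
  have "stdsimplex = (\<Inter>i. {x::real^'n. 0 \<le> x$i}) \<inter> {x. (\<Sum>i\<in>UNIV. x$i) = 1}"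
    by (auto simp: stdsimplex_def)
  also have "closed \<dots>"
    by (intro closed_Int closed_INT ballI closed_Collect_le closed_Collect_eq continuous_intros)
  finally have "closed (stdsimplex :: (real^'n) set)" .
  moreover have "stdsimplex \<subseteq> cball (0::real^'n) 1"
  proof
    fix x :: "real^'n" assume x: "x \<in> stdsimplex"
    have "norm x \<le> (\<Sum>i\<in>UNIV. \<bar>x$i\<bar>)" by (rule norm_le_l1_cart)
    also have "\<dots> = 1" using stdsimplex_sum[OF x] stdsimplex_nonneg[OF x] by simp
    finally show "x \<in> cball 0 1" by simp
  qed
  ultimately show ?thesis by (metis bounded_cball bounded_subset compact_eq_bounded_closed)
qed

lemma l1norm_diff_stdsimplex_le:
  assumes "x \<in> stdsimplex" "z \<in> stdsimplex"
  shows "l1norm (x - z) \<le> 2"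
proof -
  have "l1norm (x - z) \<le> (\<Sum>i\<in>UNIV. x$i + z$i)"
    unfolding l1norm_def using stdsimplex_nonneg[OF assms(1)] stdsimplex_nonneg[OF assms(2)]
    by (intro sum_mono) (simp add: abs_le_iff)
  also have "\<dots> = 2" using stdsimplex_sum[OF assms(1)] stdsimplex_sum[OF assms(2)]
    by (simp add: sum.distrib)
  finally show ?thesis .
qed

lemma stdsimplex_ex_pos:
  assumes "x \<in> stdsimplex"
  obtains i where "0 < x$i"
  using stdsimplex_sum[OF assms] stdsimplex_nonneg[OF assms]
  by (metis less_eq_real_def sum_nonneg_eq_0_iff finite zero_neq_one)

lemma l1norm_diff_disjoint_support:
  assumes "y \<in> stdsimplex" "z \<in> stdsimplex" "\<And>i. y$i = 0 \<or> z$i = 0"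
  shows "l1norm (y - z) = 2"
proof -
  have "l1norm (y - z) = (\<Sum>i\<in>UNIV. y$i + z$i)" unfolding l1norm_def
  proof (intro sum.cong refl)
    fix i
    show "\<bar>(y - z)$i\<bar> = y$i + z$i"
      using assms(3)[of i] stdsimplex_nonneg[OF assms(1), of i] stdsimplex_nonneg[OF assms(2), of i]
      by auto
  qed
  also have "\<dots> = 2" using stdsimplex_sum[OF assms(1)] stdsimplex_sum[OF assms(2)] by (simp add: sum.distrib)
  finally show ?thesis .
qed

lemma norm_stdsimplex_combination_le:
  fixes v :: "'n::finite \<Rightarrow> 'a::real_normed_vector"
  assumes y: "y \<in> stdsimplex" and D: "\<And>i. norm (v i) \<le> D"
  shows "norm (\<Sum>i\<in>UNIV. y$i *\<^sub>R v i) \<le> D"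
proof -
  have "norm (\<Sum>i\<in>UNIV. y$i *\<^sub>R v i) \<le> (\<Sum>i\<in>UNIV. y$i * norm (v i))"
    using norm_sum[of "\<lambda>i. y$i *\<^sub>R v i"] stdsimplex_nonneg[OF y] by simp
  also have "\<dots> \<le> (\<Sum>i\<in>UNIV. y$i * D)"
    using stdsimplex_nonneg[OF y] D by (intro sum_mono mult_left_mono) auto
  also have "\<dots> = D" using stdsimplex_sum[OF y] by (simp add: sum_distrib_right[symmetric])
  finally show ?thesis .
qed

lemma diff_stdsimplex_combination:
  fixes v :: "'n::finite \<Rightarrow> 'a::real_vector"
  assumes "y \<in> stdsimplex"
  shows "c - (\<Sum>i\<in>UNIV. y$i *\<^sub>R v i) = (\<Sum>i\<in>UNIV. y$i *\<^sub>R (c - v i))"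
proof -
  have "(\<Sum>i\<in>UNIV. y$i *\<^sub>R (c - v i)) = (\<Sum>i\<in>UNIV. y$i) *\<^sub>R c - (\<Sum>i\<in>UNIV. y$i *\<^sub>R v i)"
    by (simp add: scaleR_diff_right sum_subtractf scaleR_sum_left)
  thus ?thesis using stdsimplex_sum[OF assms] by simp
qed

lemma matrix_vector_mult_column_sum: "(B::real^'n^'m) *v x = (\<Sum>i\<in>UNIV. x$i *\<^sub>R column i B)"
  by (simp add: matrix_mult_sum scalar_mult_eq_scaleR)

lemma columns_eq_range: "columns B = range (\<lambda>i. column i B)"
  by (auto simp: columns_def)

lemma finite_columns: "finite (columns (B::real^'n^'m))"
  by (simp add: columns_eq_range)

lemma column_matrix_mult:
  fixes S :: "real^'m^'k" and A :: "real^'n^'m"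
  shows "column i (S ** A) = S *v column i A"
proof -
  have "S *v column i A = S *v (A *v axis i 1)" by (simp add: matrix_vector_mult_basis)
  also have "\<dots> = (S ** A) *v axis i 1" by (rule matrix_vector_mul_assoc)
  also have "\<dots> = column i (S ** A)" by (rule matrix_vector_mult_basis)
  finally show ?thesis by simp
qed

lemma column_in_mconv: "column i B \<in> mconv B"
  unfolding mconv_def
  by (rule CollectI, rule exI[of _ "axis i 1"]) (simp add: matrix_vector_mult_basis axis_in_stdsimplex)

lemma mconv_eq_convex_hull: "mconv (B::real^'n^'m) = convex hull (columns B)"
proof
  show "mconv B \<subseteq> convex hull (columns B)"
  proof
    fix w assume "w \<in> mconv B"
    then obtain x where x: "x \<in> stdsimplex" "w = B *v x" by (auto simp: mconv_def)
    have "(\<Sum>i\<in>UNIV. x$i *\<^sub>R column i B) \<in> convex hull (columns B)"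
      using stdsimplex_sum[OF x(1)] stdsimplex_nonneg[OF x(1)]
      by (intro convex_sum) (auto simp: columns_eq_range hull_inc)
    thus "w \<in> convex hull (columns B)" using x by (simp add: matrix_vector_mult_column_sum)
  qed
next
  have "mconv B = (\<lambda>x. B *v x) ` stdsimplex" by (auto simp: mconv_def)
  hence "convex (mconv B)" by (simp add: convex_linear_image convex_stdsimplex)
  thus "convex hull (columns B) \<subseteq> mconv B"
    by (intro hull_minimal) (auto simp: columns_eq_range column_in_mconv)
qed

lemma convex_mconv: "convex (mconv (B::real^'n^'m))"
  by (simp add: mconv_eq_convex_hull)

lemma compact_mconv: "compact (mconv (B::real^'n^'m))"
  by (simp add: mconv_eq_convex_hull finite_imp_compact_convex_hull finite_columns)

lemma compact_Zset: "compact (Zset (B::real^'n^'m) w)"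
proof -
  have "Zset B w = stdsimplex \<inter> {z. B *v z = w}" by (auto simp: Zset_def)
  moreover have "closed {z. B *v z = w}"
    by (intro closed_Collect_eq continuous_intros matrix_vector_mult_linear_continuous_on)
  ultimately show ?thesis using compact_stdsimplex by (metis compact_Int_closed)
qed

lemma l1dist_attained:
  fixes B :: "real^'n^'m"
  assumes "w \<in> mconv B"
  obtains z where "z \<in> Zset B w" "l1dist x (Zset B w) = l1norm (x - z)"
    "\<And>z'. z' \<in> Zset B w \<Longrightarrow> l1norm (x - z) \<le> l1norm (x - z')"
proof -
  have "Zset B w \<noteq> {}" using assms by (auto simp: mconv_def Zset_def)
  moreover have "continuous_on (Zset B w) (\<lambda>z. l1norm (x - z))"
    unfolding l1norm_def by (intro continuous_intros)
  ultimately obtain z where z: "z \<in> Zset B w" "\<And>z'. z' \<in> Zset B w \<Longrightarrow> l1norm (x - z) \<le> l1norm (x - z')"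
    using continuous_attains_inf[OF compact_Zset] by blast
  moreover have "l1dist x (Zset B w) = l1norm (x - z)"
    unfolding l1dist_def using z by (intro cInf_eq_minimum) auto
  ultimately show thesis using that by blast
qed

text \<open>Split \<open>x - z\<close> into its positive and negative parts; they have the same mass \<open>t\<close>.\<close>

lemma stdsimplex_diff_decomp:
  assumes x: "x \<in> stdsimplex" and z: "z \<in> stdsimplex" and xz: "x \<noteq> z"
  obtains t a b where "0 < t" "a \<in> stdsimplex" "b \<in> stdsimplex" "x - z = t *\<^sub>R (a - b)"
    "l1norm (x - z) = 2 * t" "\<And>i. t * a$i \<le> x$i"
proof -
  define P where "P i = max ((x - z)$i) 0" for i
  define N where "N i = max (- (x - z)$i) 0" for i
  define t where "t = (\<Sum>i\<in>UNIV. P i)"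
  have PN: "(x - z)$i = P i - N i" "\<bar>(x - z)$i\<bar> = P i + N i" "0 \<le> P i" "0 \<le> N i" for i
    by (auto simp: P_def N_def)
  have "0 = (\<Sum>i\<in>UNIV. (x - z)$i)"
    using stdsimplex_sum[OF x] stdsimplex_sum[OF z] by (simp add: sum_subtractf)
  also have "\<dots> = (\<Sum>i\<in>UNIV. P i - N i)" using PN(1) by simp
  also have "\<dots> = t - (\<Sum>i\<in>UNIV. N i)" by (simp add: sum_subtractf t_def)
  finally have sN: "(\<Sum>i\<in>UNIV. N i) = t" by simp
  have "l1norm (x - z) = (\<Sum>i\<in>UNIV. P i + N i)" unfolding l1norm_def PN(2) ..
  hence l1: "l1norm (x - z) = 2 * t" using sN by (simp add: sum.distrib t_def)
  have "t \<noteq> 0"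
  proof
    assume "t = 0"
    hence "\<forall>i\<in>UNIV. P i = 0" "\<forall>i\<in>UNIV. N i = 0" using sN PN(3,4) unfolding t_def
      by (simp_all add: sum_nonneg_eq_0_iff)
    hence "x = z" using PN(1) by (auto simp: vec_eq_iff)
    thus False using xz by simp
  qed
  moreover have "0 \<le> t" unfolding t_def using PN(3) by (simp add: sum_nonneg)
  ultimately have tpos: "0 < t" by simp
  define a where "a = (\<chi> i. P i / t)"
  define b where "b = (\<chi> i. N i / t)"
  have "a \<in> stdsimplex" unfolding a_def using tpos PN(3)
    by (intro stdsimplexI) (auto simp: sum_divide_distrib[symmetric] t_def)
  moreover have "b \<in> stdsimplex" unfolding b_def using tpos PN(4) sN
    by (intro stdsimplexI) (auto simp: sum_divide_distrib[symmetric])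
  moreover have "x - z = t *\<^sub>R (a - b)"
    using tpos PN(1) by (simp add: vec_eq_iff a_def b_def field_simps)
  moreover have "t * a$i \<le> x$i" for i
    using tpos stdsimplex_nonneg[OF x, of i] stdsimplex_nonneg[OF z, of i] by (simp add: a_def P_def)
  ultimately show thesis using that tpos l1 by blast
qed

section \<open>Reduction to the squared Euclidean norm\<close>

text \<open>The ratio set of \<open>g(v) = \<parallel>v\<parallel>\<^sup>2 / 2\<close> with respect to \<open>B\<close>.\<close>

definition euclidean_ratio_set :: "real^'n^'m \<Rightarrow> real set" where
  "euclidean_ratio_set B = {(norm (B *v x - w))^2 / (l1dist x (Zset B w))^2
                            | w x. w \<in> mconv B \<and> x \<in> stdsimplex - Zset B w}"

lemma quadratic_has_derivative:
  fixes Q :: "real^'m^'m" and b :: "real^'m"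
  shows "((\<lambda>u. (1/2) * ((Q *v u) \<bullet> u) + b \<bullet> u) has_derivative
     (\<lambda>h. (1/2) * ((Q *v h) \<bullet> u + (Q *v u) \<bullet> h) + b \<bullet> h)) (at u)"
  by (auto intro!: derivative_eq_intros bounded_linear_imp_has_derivative)

lemma quadratic_bregman_divergence:
  fixes Q S :: "real^'m^'m" and b :: "real^'m"
  assumes "transpose S = S" "S ** S = Q"
  defines "f \<equiv> (\<lambda>u. (1/2) * ((Q *v u) \<bullet> u) + b \<bullet> u)"
  shows "2 * (f y - f u - frechet_derivative f (at u) (y - u)) = (norm (S *v (y - u)))^2"
proof -
  have "(norm (S *v (y - u)))^2 = (S *v (S *v (y - u))) \<bullet> (y - u)"
    using symmetric_matrix_inner_commute[OF assms(1), of "S *v (y - u)" "y - u"]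
    by (simp add: power2_norm_eq_inner)
  also have "\<dots> = (Q *v (y - u)) \<bullet> (y - u)" using assms(2) by (simp add: matrix_vector_mul_assoc)
  finally show ?thesis
    unfolding frechet_derivative_at[OF quadratic_has_derivative[of Q b u], folded f_def, symmetric]
    by (simp add: f_def matrix_vector_mult_diff_distrib inner_diff_left inner_diff_right algebra_simps)
qed

lemma sym_pos_def_square_root_inj:
  fixes Q S :: "real^'m^'m"
  assumes "sym_pos_def Q" "S ** S = Q"
  shows "S *v v = S *v w \<longleftrightarrow> v = w"
proof
  assume Svw: "S *v v = S *v w"
  have "Q *v (v - w) = S *v (S *v (v - w))" using assms(2) by (simp add: matrix_vector_mul_assoc)
  also have "\<dots> = 0" using Svw by (simp add: matrix_vector_mult_diff_distrib)
  finally have "Q *v (v - w) = 0" .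
  with assms(1) show "v = w" by (metis inner_zero_left less_irrefl right_minus_eq sym_pos_def_def)
qed simp

lemma mconv_matrix_mult: "mconv (S ** A) = (\<lambda>u. S *v u) ` mconv A"
  by (auto simp: mconv_def matrix_vector_mul_assoc[symmetric])

lemma Zset_matrix_mult:
  assumes "\<And>v w. S *v v = S *v w \<longleftrightarrow> v = w"
  shows "Zset (S ** A) (S *v u) = Zset A u"
  by (simp add: Zset_def matrix_vector_mul_assoc[symmetric] assms)

lemma ratio_set_quadratic:
  fixes Q S :: "real^'m^'m" and b :: "real^'m" and A :: "real^'n^'m"
  assumes "sym_pos_def Q" "transpose S = S" "S ** S = Q"
  shows "ratio_set (\<lambda>u. (1/2) * ((Q *v u) \<bullet> u) + b \<bullet> u) A = euclidean_ratio_set (S ** A)"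
proof -
  note Zset_eq = Zset_matrix_mult[OF sym_pos_def_square_root_inj[OF assms(1,3)]]
  have "ratio_set (\<lambda>u. (1/2) * ((Q *v u) \<bullet> u) + b \<bullet> u) A
      = {(norm (S *v (A *v x - u)))^2 / (l1dist x (Zset A u))^2
         | u x. u \<in> mconv A \<and> x \<in> stdsimplex - Zset A u}"
    unfolding ratio_set_def quadratic_bregman_divergence[OF assms(2,3)] ..
  also have "\<dots> = {(norm ((S ** A) *v x - S *v u))^2 / (l1dist x (Zset (S ** A) (S *v u)))^2
         | u x. u \<in> mconv A \<and> x \<in> stdsimplex - Zset (S ** A) (S *v u)}"
    by (simp add: Zset_eq matrix_vector_mult_diff_distrib matrix_vector_mul_assoc[symmetric])
  also have "\<dots> = euclidean_ratio_set (S ** A)"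
    unfolding euclidean_ratio_set_def mconv_matrix_mult by blast
  finally show ?thesis .
qed

section \<open>The smoothness constant and the diameter\<close>

lemma nearest_point_decomp:
  fixes B :: "real^'n^'m"
  assumes w: "w \<in> mconv B" and x: "x \<in> stdsimplex" "x \<notin> Zset B w"
  obtains z t a b where "z \<in> Zset B w" "\<And>z'. z' \<in> Zset B w \<Longrightarrow> l1norm (x - z) \<le> l1norm (x - z')"
    "l1dist x (Zset B w) = l1norm (x - z)" "l1norm (x - z) = 2 * t" "0 < t"
    "a \<in> stdsimplex" "b \<in> stdsimplex" "x - z = t *\<^sub>R (a - b)"
    "B *v x - w = t *\<^sub>R (B *v a - B *v b)" "\<And>i. t * a$i \<le> x$i"
proof -
  obtain z where z: "z \<in> Zset B w" "l1dist x (Zset B w) = l1norm (x - z)"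
    "\<And>z'. z' \<in> Zset B w \<Longrightarrow> l1norm (x - z) \<le> l1norm (x - z')"
    using l1dist_attained[OF w] by blast
  have zs: "z \<in> stdsimplex" "B *v z = w" using z(1) by (auto simp: Zset_def)
  have "x \<noteq> z" using x(2) z(1) by auto
  then obtain t a b where tab: "0 < t" "a \<in> stdsimplex" "b \<in> stdsimplex" "x - z = t *\<^sub>R (a - b)"
    "l1norm (x - z) = 2 * t" "\<And>i. t * a$i \<le> x$i"
    using stdsimplex_diff_decomp[OF x(1) zs(1)] by blast
  have "B *v x - w = B *v (x - z)" using zs by (simp add: matrix_vector_mult_diff_distrib)
  also have "\<dots> = t *\<^sub>R (B *v a - B *v b)"
    by (simp add: tab(4) matrix_vector_mult_scaleR matrix_vector_mult_diff_distrib)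
  finally show thesis using that z tab by blast
qed

lemma norm_column_diff_le_mdiam: "norm (column i B - column j (B::real^'n^'m)) \<le> mdiam B"
  using diameter_bounded_bound[of "columns B" "column i B" "column j B"]
  by (simp add: mdiam_def columns_eq_range dist_norm finite_imp_bounded)

lemma norm_matrix_vector_diff_le_mdiam:
  fixes B :: "real^'n^'m"
  assumes a: "a \<in> stdsimplex" and b: "b \<in> stdsimplex"
  shows "norm (B *v a - B *v b) \<le> mdiam B"
proof -
  have "norm (column i B - B *v b) \<le> mdiam B" for i
    unfolding matrix_vector_mult_column_sum[of B b] diff_stdsimplex_combination[OF b]
    by (rule norm_stdsimplex_combination_le[OF b norm_column_diff_le_mdiam])
  hence "norm (B *v b - B *v a) \<le> mdiam B"
    unfolding matrix_vector_mult_column_sum[of B a] diff_stdsimplex_combination[OF a]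
    by (intro norm_stdsimplex_combination_le[OF a]) (simp add: norm_minus_commute)
  thus ?thesis by (simp add: norm_minus_commute)
qed

lemma euclidean_ratio_le_mdiam:
  fixes B :: "real^'n^'m"
  assumes "r \<in> euclidean_ratio_set B"
  shows "r \<le> (mdiam B)^2 / 4"
proof -
  obtain w x where wx: "w \<in> mconv B" "x \<in> stdsimplex" "x \<notin> Zset B w"
    and r: "r = (norm (B *v x - w))^2 / (l1dist x (Zset B w))^2"
    using assms by (auto simp: euclidean_ratio_set_def)
  obtain z t a b where e: "l1dist x (Zset B w) = l1norm (x - z)" "l1norm (x - z) = 2 * t" "0 < t"
    "a \<in> stdsimplex" "b \<in> stdsimplex" "B *v x - w = t *\<^sub>R (B *v a - B *v b)"
    using nearest_point_decomp[OF wx] by metis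
  have "r = (norm (B *v a - B *v b))^2 / 4"
    using e(3) by (simp add: r e(1,2,6) power_mult_distrib)
  also have "\<dots> \<le> (mdiam B)^2 / 4"
    using norm_matrix_vector_diff_le_mdiam[OF e(4,5)] by (intro divide_right_mono power_mono) auto
  finally show ?thesis .
qed

text \<open>The bound is attained at a vertex \<open>x = e\<^sub>i\<close> and \<open>w\<close> the column farthest from column \<open>i\<close>.\<close>

lemma mdiam_in_euclidean_ratio_set:
  fixes B :: "real^'n^'m"
  assumes "\<exists>i j. column i B \<noteq> column j B"
  shows "(mdiam B)^2 / 4 \<in> euclidean_ratio_set B"
proof -
  obtain i j where ij: "norm (column i B - column j B) = mdiam B"
    using diameter_compact_attained[of "columns B"]
    by (auto simp: mdiam_def columns_eq_range dist_norm finite_imp_compact)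
  obtain i0 j0 where "column i0 B \<noteq> column j0 B" using assms by blast
  hence "0 < norm (column i0 B - column j0 B)" by simp
  hence "0 < mdiam B" using norm_column_diff_le_mdiam[of i0 B j0] by linarith
  hence ne: "column i B \<noteq> column j B" using ij by auto
  define w where "w = column j B"
  define x :: "real^'n" where "x = axis i 1"
  have w: "w \<in> mconv B" by (simp add: w_def column_in_mconv)
  have Bx: "B *v x = column i B" by (simp add: x_def matrix_vector_mult_basis)
  have x: "x \<in> stdsimplex" "x \<notin> Zset B w"
    using ne Bx by (auto simp: x_def axis_in_stdsimplex Zset_def w_def)
  obtain z t where e: "z \<in> Zset B w" "l1dist x (Zset B w) = l1norm (x - z)"
    "l1norm (x - z) = 2 * t" "0 < t"
    using nearest_point_decomp[OF w x] by metis
  have "2 * t \<le> 2" using e(1,3) l1norm_diff_stdsimplex_le[OF x(1), of z] by (simp add: Zset_def)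
  define r where "r = (norm (B *v x - w))^2 / (l1dist x (Zset B w))^2"
  have rR: "r \<in> euclidean_ratio_set B" unfolding euclidean_ratio_set_def r_def using w x by blast
  have "(mdiam B)^2 / 4 \<le> (mdiam B)^2 / (2 * t)^2"
    using \<open>2 * t \<le> 2\<close> e(4) by (intro divide_left_mono) (auto simp: power_le_one)
  also have "\<dots> = r"
    using ij by (simp add: r_def Bx e(2,3) flip: w_def)
  finally have "(mdiam B)^2 / 4 = r" using euclidean_ratio_le_mdiam[OF rR] by linarith
  thus ?thesis using rR by simp
qed

lemma Sup_euclidean_ratio_set:
  fixes B :: "real^'n^'m"
  assumes "\<exists>i j. column i B \<noteq> column j B"
  shows "Sup (euclidean_ratio_set B) = (mdiam B)^2 / 4"
  using mdiam_in_euclidean_ratio_set[OF assms] euclidean_ratio_le_mdiam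
  by (intro cSup_eq_maximum) auto

section \<open>The strong convexity constant and the facial distance\<close>

text \<open>The points of \<open>P\<close> through which the segment towards \<open>p\<close> can be prolonged beyond \<open>p\<close>
  inside \<open>P\<close>; for convex \<open>P\<close> this is the smallest face of \<open>P\<close> containing \<open>p\<close>.\<close>

definition extension_face :: "'a::real_vector set \<Rightarrow> 'a \<Rightarrow> 'a set" where
  "extension_face P p = {y \<in> P. \<exists>d>0. p + d *\<^sub>R (p - y) \<in> P}"

lemma mem_extension_face: "p \<in> P \<Longrightarrow> p \<in> extension_face P p"
  by (auto simp: extension_face_def intro: exI[of _ 1])

lemma convex_extension_shrink:
  fixes p y :: "'a::real_vector"
  assumes "convex P" "p \<in> P" "p + d *\<^sub>R (p - y) \<in> P" "0 < d'" "d' \<le> d"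
  shows "p + d' *\<^sub>R (p - y) \<in> P"
proof -
  have "(1 - d'/d) *\<^sub>R p + (d'/d) *\<^sub>R (p + d *\<^sub>R (p - y)) \<in> P"
    using assms by (intro convexD) (auto simp: field_simps)
  also have "(1 - d'/d) *\<^sub>R p + (d'/d) *\<^sub>R (p + d *\<^sub>R (p - y)) = p + d' *\<^sub>R (p - y)"
    using assms by (simp add: algebra_simps)
  finally show ?thesis .
qed

lemma convex_extension_face:
  assumes "convex P" "p \<in> P"
  shows "convex (extension_face P p)"
proof (rule convexI)
  fix y1 y2 u v assume y: "y1 \<in> extension_face P p" "y2 \<in> extension_face P p"
    and uv: "0 \<le> (u::real)" "0 \<le> v" "u + v = 1"
  obtain d1 d2 where d: "0 < d1" "p + d1 *\<^sub>R (p - y1) \<in> P" "0 < d2" "p + d2 *\<^sub>R (p - y2) \<in> P"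
    using y by (auto simp: extension_face_def)
  define d where "d = min d1 d2"
  have "u *\<^sub>R (p + d *\<^sub>R (p - y1)) + v *\<^sub>R (p + d *\<^sub>R (p - y2)) \<in> P"
    using convex_extension_shrink[OF assms d(2)] convex_extension_shrink[OF assms d(4)] d uv assms(1)
    by (intro convexD) (auto simp: d_def)
  also have "u *\<^sub>R (p + d *\<^sub>R (p - y1)) + v *\<^sub>R (p + d *\<^sub>R (p - y2))
     = (u + v) *\<^sub>R p + d *\<^sub>R ((u + v) *\<^sub>R p - (u *\<^sub>R y1 + v *\<^sub>R y2))"
    by (simp add: algebra_simps)
  finally have "p + d *\<^sub>R (p - (u *\<^sub>R y1 + v *\<^sub>R y2)) \<in> P" using uv by simp
  moreover have "u *\<^sub>R y1 + v *\<^sub>R y2 \<in> P"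
    using y uv assms(1) by (intro convexD) (auto simp: extension_face_def)
  moreover have "0 < d" using d by (simp add: d_def)
  ultimately show "u *\<^sub>R y1 + v *\<^sub>R y2 \<in> extension_face P p" by (auto simp: extension_face_def)
qed

text \<open>With \<open>y = (1 - \<theta>) a + \<theta> b\<close> and \<open>\<mu> = 1 / (1 + d \<theta>)\<close>, the point
  \<open>\<mu> (p + d (p - y)) + (1 - \<mu>) b\<close> of \<open>P\<close> prolongs the segment from \<open>a\<close> beyond \<open>p\<close>.\<close>

lemma extension_face_open_segment:
  fixes p :: "'a::real_vector"
  assumes P: "convex P" and ab: "a \<in> P" "b \<in> P"
    and y: "y \<in> extension_face P p" "y \<in> open_segment a b"
  shows "a \<in> extension_face P p"
proof -
  obtain th where th: "0 < th" "th < 1" "y = (1 - th) *\<^sub>R a + th *\<^sub>R b"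
    using y(2) by (auto simp: in_segment)
  obtain d where d: "0 < d" "p + d *\<^sub>R (p - y) \<in> P" using y(1) by (auto simp: extension_face_def)
  define mu where "mu = 1 / (1 + d * th)"
  define d' where "d' = mu * (d * (1 - th))"
  have "0 < d * th" using d(1) th(1) by simp
  hence mu: "0 < mu" "mu \<le> 1" "mu * (1 + d) = 1 + d'" "(1 - mu) - mu * (d * th) = 0"
    by (auto simp: mu_def d'_def field_simps)
  have "mu *\<^sub>R (p + d *\<^sub>R (p - y)) + (1 - mu) *\<^sub>R b \<in> P"
    using mu by (intro convexD[OF P d(2) ab(2)]) auto
  also have "mu *\<^sub>R (p + d *\<^sub>R (p - y)) + (1 - mu) *\<^sub>R b
      = (mu * (1 + d)) *\<^sub>R p - (mu * (d * (1 - th))) *\<^sub>R a + ((1 - mu) - mu * (d * th)) *\<^sub>R b"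
    by (simp add: th(3) algebra_simps)
  also have "\<dots> = p + d' *\<^sub>R (p - a)"
    by (simp only: mu(3,4) d'_def[symmetric]) (simp add: algebra_simps)
  finally have "p + d' *\<^sub>R (p - a) \<in> P" .
  moreover have "0 < d'" using d th mu by (simp add: d'_def)
  ultimately show ?thesis using ab by (auto simp: extension_face_def)
qed

lemma extension_face_face_of:
  assumes "convex P" "p \<in> P"
  shows "extension_face P p face_of P"
proof -
  have "a \<in> extension_face P p \<and> b \<in> extension_face P p"
    if "a \<in> P" "b \<in> P" "y \<in> extension_face P p" "y \<in> open_segment a b" for a b y
    using extension_face_open_segment[OF assms(1) that] that(4)
      extension_face_open_segment[OF assms(1) that(2,1,3)] by (simp add: open_segment_commute)
  moreover have "extension_face P p \<subseteq> P" by (auto simp: extension_face_def)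
  ultimately show ?thesis using convex_extension_face[OF assms] unfolding face_of_def by blast
qed

definition proper_face :: "real^'n^'m \<Rightarrow> (real^'m) set \<Rightarrow> bool" where
  "proper_face B F \<longleftrightarrow> F face_of mconv B \<and> F \<noteq> {} \<and> F \<noteq> mconv B"

definition face_gap :: "real^'n^'m \<Rightarrow> (real^'m) set \<Rightarrow> real" where
  "face_gap B F = setdist F (convex hull {c \<in> columns B. c \<notin> F})"

lemma facial_distance_eq_Inf: "facial_distance B = Inf (face_gap B ` Collect (proper_face B))"
  unfolding facial_distance_def proper_face_def face_gap_def by (rule arg_cong[where f = Inf]) blast

lemma convex_hull_columns_subset_eq:
  fixes B :: "real^'n^'m"
  assumes "C \<subseteq> columns B"
  shows "convex hull C = {B *v y | y. y \<in> stdsimplex \<and> (\<forall>i. 0 < y$i \<longrightarrow> column i B \<in> C)}"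
    (is "_ = ?K")
proof
  have "convex ?K"
  proof (rule convexI)
    fix q1 q2 u v assume q: "q1 \<in> ?K" "q2 \<in> ?K" and uv: "0 \<le> (u::real)" "0 \<le> v" "u + v = 1"
    then obtain y1 y2 where y: "y1 \<in> stdsimplex" "\<forall>i. 0 < y1$i \<longrightarrow> column i B \<in> C" "q1 = B *v y1"
      "y2 \<in> stdsimplex" "\<forall>i. 0 < y2$i \<longrightarrow> column i B \<in> C" "q2 = B *v y2" by blast
    have "u *\<^sub>R y1 + v *\<^sub>R y2 \<in> stdsimplex" using y(1,4) uv by (intro convexD[OF convex_stdsimplex])
    moreover have "column i B \<in> C" if pos: "0 < (u *\<^sub>R y1 + v *\<^sub>R y2)$i" for i
    proof -
      have "y1$i \<noteq> 0 \<or> y2$i \<noteq> 0" using pos by auto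
      hence "0 < y1$i \<or> 0 < y2$i"
        using stdsimplex_nonneg[OF y(1), of i] stdsimplex_nonneg[OF y(4), of i] by auto
      thus ?thesis using y(2,5) by blast
    qed
    moreover have "u *\<^sub>R q1 + v *\<^sub>R q2 = B *v (u *\<^sub>R y1 + v *\<^sub>R y2)"
      by (simp add: y(3,6) matrix_vector_right_distrib matrix_vector_mult_scaleR)
    ultimately show "u *\<^sub>R q1 + v *\<^sub>R q2 \<in> ?K" by blast
  qed
  moreover have "C \<subseteq> ?K"
  proof
    fix c assume "c \<in> C"
    then obtain i where i: "c = column i B" using assms by (auto simp: columns_eq_range)
    have "\<forall>k. 0 < (axis i 1 :: real^'n)$k \<longrightarrow> column k B \<in> C" using \<open>c \<in> C\<close> i by (simp add: axis_def)
    moreover have "c = B *v axis i 1" using i by (simp add: matrix_vector_mult_basis)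
    ultimately show "c \<in> ?K" using axis_in_stdsimplex by blast
  qed
  ultimately show "convex hull C \<subseteq> ?K" by (rule hull_minimal[rotated])
next
  show "?K \<subseteq> convex hull C"
  proof
    fix q assume "q \<in> ?K"
    then obtain y where y: "y \<in> stdsimplex" "\<And>i. 0 < y$i \<Longrightarrow> column i B \<in> C" "q = B *v y" by blast
    define I where "I = {i. 0 < y$i}"
    have y0: "y$i = 0" if "i \<notin> I" for i using that stdsimplex_nonneg[OF y(1), of i] by (simp add: I_def)
    have "q = (\<Sum>i\<in>I. y$i *\<^sub>R column i B)"
      unfolding y(3) matrix_vector_mult_column_sum using y0 by (intro sum.mono_neutral_right) auto
    also have "\<dots> \<in> convex hull C"
    proof (rule convex_sum)
      have "(\<Sum>i\<in>I. y$i) = (\<Sum>i\<in>UNIV. y$i)" using y0 by (intro sum.mono_neutral_left) auto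
      thus "(\<Sum>i\<in>I. y$i) = 1" using stdsimplex_sum[OF y(1)] by simp
    qed (use y(2) in \<open>auto simp: I_def hull_inc\<close>)
    finally show "q \<in> convex hull C" .
  qed
qed

lemma column_in_face_of_support:
  fixes B :: "real^'n^'m"
  assumes F: "F face_of mconv B" and z: "z \<in> stdsimplex" "B *v z \<in> F" and zi: "0 < z$i"
  shows "column i B \<in> F"
proof (cases "z$i = 1")
  case True
  have "(\<Sum>k\<in>UNIV-{i}. z$k) = 0"
    using stdsimplex_sum[OF z(1)] True by (simp add: sum.remove[of UNIV i])
  hence "z = axis i 1"
    using True stdsimplex_nonneg[OF z(1)] by (auto simp: vec_eq_iff axis_def sum_nonneg_eq_0_iff)
  thus ?thesis using z(2) by (simp add: matrix_vector_mult_basis)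
next
  case False
  define th where "th = z$i"
  have "z$i \<le> 1"
    using stdsimplex_sum[OF z(1)] member_le_sum[of i UNIV "\<lambda>k. z$k"] stdsimplex_nonneg[OF z(1)] by simp
  hence th: "0 < th" "th < 1" using False zi by (auto simp: th_def)
  define y where "y = (1 / (1 - th)) *\<^sub>R (z - th *\<^sub>R axis i 1)"
  have "y \<in> stdsimplex"
  proof (rule stdsimplexI)
    fix k show "0 \<le> y$k" using th stdsimplex_nonneg[OF z(1), of k] by (auto simp: y_def axis_def th_def)
  next
    show "(\<Sum>k\<in>UNIV. y$k) = 1"
      using th stdsimplex_sum[OF z(1)] stdsimplex_sum[OF axis_in_stdsimplex[of i]]
      by (simp add: y_def sum_divide_distrib[symmetric] sum_distrib_left[symmetric] sum_subtractf)
  qed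
  hence y: "B *v y \<in> mconv B" by (auto simp: mconv_def)
  have "(1 - th) *\<^sub>R y = z - th *\<^sub>R axis i 1" using th by (simp add: y_def)
  hence "(1 - th) *\<^sub>R (B *v y) = B *v z - th *\<^sub>R column i B"
    by (metis matrix_vector_mult_basis matrix_vector_mult_diff_distrib matrix_vector_mult_scaleR)
  hence Bz: "B *v z = (1 - th) *\<^sub>R (B *v y) + th *\<^sub>R column i B" by (simp add: algebra_simps)
  show ?thesis
  proof (cases "B *v y = column i B")
    case True
    thus ?thesis using Bz z(2) by (simp flip: scaleR_add_left)
  next
    case False
    hence "B *v z \<in> open_segment (B *v y) (column i B)" using th Bz by (auto simp: in_segment)
    from face_ofD[OF F this y column_in_mconv z(2)] show ?thesis by simp
  qed
qed

lemma column_in_extension_face_weight: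
  fixes B :: "real^'n^'m"
  assumes "column i B \<in> extension_face (mconv B) p"
  obtains y where "y \<in> stdsimplex" "B *v y = p" "0 < y$i"
proof -
  obtain d y' where d: "0 < d" "y' \<in> stdsimplex" "B *v y' = p + d *\<^sub>R (p - column i B)"
    using assms by (auto simp: extension_face_def mconv_def)
  define y where "y = (1 / (1 + d)) *\<^sub>R (y' + d *\<^sub>R axis i 1)"
  have "y \<in> stdsimplex"
  proof (rule stdsimplexI)
    fix k show "0 \<le> y$k" using d stdsimplex_nonneg[OF d(2), of k] by (simp add: y_def axis_def)
  next
    show "(\<Sum>k\<in>UNIV. y$k) = 1"
      using d stdsimplex_sum[OF d(2)] stdsimplex_sum[OF axis_in_stdsimplex[of i]]
      by (simp add: y_def sum_divide_distrib[symmetric] sum_distrib_left[symmetric] sum.distrib)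
  qed
  moreover have "B *v y = (1 / (1 + d)) *\<^sub>R (B *v y' + d *\<^sub>R column i B)"
    by (simp add: y_def matrix_vector_mult_scaleR matrix_vector_right_distrib matrix_vector_mult_basis)
  hence "B *v y = p" using d by (simp add: d(3) algebra_simps add_divide_distrib[symmetric] flip: scaleR_add_left)
  moreover have "0 < y$i" using d stdsimplex_nonneg[OF d(2), of i] by (simp add: y_def)
  ultimately show thesis using that by blast
qed

text \<open>If a column in the support of \<open>a\<close> lay in the face generated by \<open>B b\<close>, then \<open>b\<close> could be
  replaced by a representation of \<open>B b\<close> overlapping \<open>a\<close>, giving a point of \<open>Z(w)\<close> strictly closer
  to \<open>x\<close>.\<close>

lemma nearest_decomp_support_avoids_face:
  fixes B :: "real^'n^'m"
  assumes nearest: "\<And>z'. z' \<in> Zset B w \<Longrightarrow> 2 * t \<le> l1norm (x - z')"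
    and t: "0 < t" and x: "x \<in> stdsimplex" and a: "a \<in> stdsimplex" "\<And>k. t * a$k \<le> x$k"
    and Bx: "B *v x - w = t *\<^sub>R (B *v a - B *v b)" and ai: "0 < a$i"
  shows "column i B \<notin> extension_face (mconv B) (B *v b)"
proof
  assume "column i B \<in> extension_face (mconv B) (B *v b)"
  then obtain b' where b': "b' \<in> stdsimplex" "B *v b' = B *v b" "0 < b'$i"
    using column_in_extension_face_weight by blast
  define z' where "z' = x - t *\<^sub>R (a - b')"
  have "z' \<in> stdsimplex"
  proof (rule stdsimplexI)
    fix k
    have "0 \<le> t * b'$k" using t stdsimplex_nonneg[OF b'(1), of k] by simp
    thus "0 \<le> z'$k" using a(2)[of k] by (simp add: z'_def algebra_simps)
  next
    show "(\<Sum>k\<in>UNIV. z'$k) = 1"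
      using stdsimplex_sum[OF x] stdsimplex_sum[OF a(1)] stdsimplex_sum[OF b'(1)]
      by (simp add: z'_def sum_subtractf sum_distrib_left[symmetric])
  qed
  moreover have "B *v z' = w"
    using b'(2) by (simp add: z'_def matrix_vector_mult_diff_distrib matrix_vector_mult_scaleR flip: Bx)
  ultimately have "2 * t \<le> l1norm (x - z')" by (intro nearest) (simp add: Zset_def)
  also have "l1norm (x - z') = (\<Sum>k\<in>UNIV. t * \<bar>a$k - b'$k\<bar>)"
    unfolding l1norm_def using t by (simp add: z'_def abs_mult)
  also have "\<dots> < (\<Sum>k\<in>UNIV. t * (a$k + b'$k))"
  proof (rule sum_strict_mono_ex1)
    show "\<forall>k\<in>UNIV. t * \<bar>a$k - b'$k\<bar> \<le> t * (a$k + b'$k)"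
      using t stdsimplex_nonneg[OF a(1)] stdsimplex_nonneg[OF b'(1)] by (simp add: abs_le_iff)
    show "\<exists>k\<in>UNIV. t * \<bar>a$k - b'$k\<bar> < t * (a$k + b'$k)"
      using t ai b'(3) by (intro bexI[of _ i]) auto
  qed simp
  also have "\<dots> = 2 * t"
    using stdsimplex_sum[OF a(1)] stdsimplex_sum[OF b'(1)]
    by (simp add: sum_distrib_left[symmetric] sum.distrib)
  finally show False by simp
qed

lemma proper_face_gap_le:
  fixes B :: "real^'n^'m"
  assumes w: "w \<in> mconv B" and x: "x \<in> stdsimplex" "x \<notin> Zset B w"
  obtains F where "proper_face B F" "face_gap B F * l1dist x (Zset B w) \<le> 2 * norm (B *v x - w)"
proof -
  obtain z t a b where e: "z \<in> Zset B w" "\<And>z'. z' \<in> Zset B w \<Longrightarrow> l1norm (x - z) \<le> l1norm (x - z')"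
    "l1dist x (Zset B w) = l1norm (x - z)" "l1norm (x - z) = 2 * t" "0 < t"
    "a \<in> stdsimplex" "b \<in> stdsimplex" "x - z = t *\<^sub>R (a - b)"
    "B *v x - w = t *\<^sub>R (B *v a - B *v b)" "\<And>i. t * a$i \<le> x$i"
    using nearest_point_decomp[OF w x] by metis
  define F where "F = extension_face (mconv B) (B *v b)"
  have pP: "B *v b \<in> mconv B" using e(7) by (auto simp: mconv_def)
  have Ff: "F face_of mconv B" unfolding F_def using convex_mconv pP by (rule extension_face_face_of)
  have pF: "B *v b \<in> F" unfolding F_def using pP by (rule mem_extension_face)
  have nearest: "2 * t \<le> l1norm (x - z')" if "z' \<in> Zset B w" for z'
    using e(2)[OF that] e(4) by simp
  have notF: "column i B \<notin> F" if "0 < a$i" for i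
    unfolding F_def by (rule nearest_decomp_support_avoids_face[OF nearest e(5) x(1) e(6) e(10) e(9) that])
  have "column i B \<in> {c \<in> columns B. c \<notin> F}" if "0 < a$i" for i
    using notF[OF that] by (simp add: columns_eq_range)
  hence "B *v a \<in> {B *v y | y. y \<in> stdsimplex \<and> (\<forall>i. 0 < y$i \<longrightarrow> column i B \<in> {c \<in> columns B. c \<notin> F})}"
    using e(6) by blast
  hence "B *v a \<in> convex hull {c \<in> columns B. c \<notin> F}"
    by (subst convex_hull_columns_subset_eq) auto
  hence "face_gap B F \<le> norm (B *v a - B *v b)"
    using setdist_le_dist[OF pF] by (simp add: face_gap_def dist_commute dist_norm)
  hence "face_gap B F * l1dist x (Zset B w) \<le> norm (B *v a - B *v b) * (2 * t)"
    using e(3-5) by (simp add: mult_right_mono)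
  also have "\<dots> = 2 * norm (B *v x - w)" using e(5,9) by simp
  finally have "face_gap B F * l1dist x (Zset B w) \<le> 2 * norm (B *v x - w)" .
  moreover obtain i where "0 < a$i" using stdsimplex_ex_pos[OF e(6)] .
  hence "F \<noteq> mconv B" using notF column_in_mconv by blast
  ultimately show thesis using that Ff pF by (auto simp: proper_face_def)
qed

text \<open>Conversely, a pair of nearest points \<open>q \<in> conv(B \ F)\<close>, \<open>p \<in> F\<close> yields a ratio of exactly
  \<open>\<parallel>q - p\<parallel>\<^sup>2 / 4\<close>: a representation of \<open>q\<close> supported off \<open>F\<close> is at \<open>\<ell>\<^sub>1\<close>-distance \<open>2\<close> from
  every representation of \<open>p\<close>, whose support lies in \<open>F\<close>.\<close>

lemma face_gap_in_euclidean_ratio_set: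
  fixes B :: "real^'n^'m"
  assumes "proper_face B F"
  shows "(face_gap B F)^2 / 4 \<in> euclidean_ratio_set B"
proof -
  define C where "C = {c \<in> columns B. c \<notin> F}"
  have F: "F face_of mconv B" "F \<noteq> {}" "F \<noteq> mconv B" using assms by (auto simp: proper_face_def)
  have "C \<noteq> {}"
  proof
    assume "C = {}"
    hence "convex hull (columns B) \<subseteq> F"
      using face_of_imp_convex[OF F(1)] by (intro hull_minimal) (auto simp: C_def)
    thus False using F(1,3) face_of_imp_subset by (fastforce simp: mconv_eq_convex_hull)
  qed
  moreover have "compact (convex hull C)"
    by (simp add: C_def finite_imp_compact_convex_hull finite_columns)
  moreover have "closed F" using face_of_imp_closed[OF convex_mconv compact_imp_closed[OF compact_mconv] F(1)] .
  ultimately obtain q p where qp: "q \<in> convex hull C" "p \<in> F" "dist q p = face_gap B F"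
    using setdist_compact_closed[of "convex hull C" F] F(2) by (auto simp: face_gap_def C_def setdist_sym)
  obtain y where y: "y \<in> stdsimplex" "B *v y = q" "\<And>i. 0 < y$i \<Longrightarrow> column i B \<in> C"
    using qp(1) convex_hull_columns_subset_eq[of C B] by (auto simp: C_def)
  have pP: "p \<in> mconv B" using F(1) qp(2) face_of_imp_subset by blast
  have l1: "l1norm (y - z) = 2" if z: "z \<in> Zset B p" for z
  proof (rule l1norm_diff_disjoint_support[OF y(1)])
    show zs: "z \<in> stdsimplex" using z by (simp add: Zset_def)
    fix i
    have "column i B \<in> F" if "0 < z$i"
      using column_in_face_of_support[OF F(1) zs _ that] z qp(2) by (simp add: Zset_def)
    hence "\<not> (0 < y$i \<and> 0 < z$i)" using y(3)[of i] by (auto simp: C_def)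
    thus "y$i = 0 \<or> z$i = 0"
      using stdsimplex_nonneg[OF y(1), of i] stdsimplex_nonneg[OF zs, of i] by linarith
  qed
  have yZ: "y \<notin> Zset B p" using l1[of y] by (auto simp: l1norm_def)
  obtain z where "z \<in> Zset B p" "l1dist y (Zset B p) = l1norm (y - z)"
    using l1dist_attained[OF pP] by blast
  hence "l1dist y (Zset B p) = 2" using l1 by simp
  hence "(face_gap B F)^2 / 4 = (norm (B *v y - p))^2 / (l1dist y (Zset B p))^2"
    using qp(3) y(2) by (simp add: dist_norm)
  thus ?thesis unfolding euclidean_ratio_set_def using pP y(1) yZ by blast
qed

text \<open>The faces of the polytope \<open>conv(B)\<close> are finitely many, so the facial distance is attained.\<close>

lemma Inf_euclidean_ratio_set:
  fixes B :: "real^'n^'m"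
  assumes "\<exists>i j. column i B \<noteq> column j B"
  shows "Inf (euclidean_ratio_set B) = (facial_distance B)^2 / 4"
proof -
  define G where "G = face_gap B ` Collect (proper_face B)"
  have "finite G"
    using finite_polytope_faces[OF polytope_convex_hull[OF finite_columns[of B]]]
    unfolding G_def proper_face_def mconv_eq_convex_hull by (auto intro: finite_subset)
  obtain w x where wx: "w \<in> mconv B" "x \<in> stdsimplex" "x \<notin> Zset B w"
    using mdiam_in_euclidean_ratio_set[OF assms] by (auto simp: euclidean_ratio_set_def)
  then obtain F where "proper_face B F" using proper_face_gap_le by metis
  hence "G \<noteq> {}" by (auto simp: G_def)
  then obtain F0 where F0: "proper_face B F0" "facial_distance B = face_gap B F0"
    using Min_in[OF \<open>finite G\<close>] cInf_eq_Min[OF \<open>finite G\<close>] by (auto simp: facial_distance_eq_Inf G_def)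
  have "(facial_distance B)^2 / 4 \<le> r" if r: "r \<in> euclidean_ratio_set B" for r
  proof -
    obtain w x where wx: "w \<in> mconv B" "x \<in> stdsimplex" "x \<notin> Zset B w"
      and r: "r = (norm (B *v x - w))^2 / (l1dist x (Zset B w))^2"
      using r by (auto simp: euclidean_ratio_set_def)
    obtain F where F: "proper_face B F" "face_gap B F * l1dist x (Zset B w) \<le> 2 * norm (B *v x - w)"
      using proper_face_gap_le[OF wx] by blast
    obtain z t where "l1dist x (Zset B w) = l1norm (x - z)" "l1norm (x - z) = 2 * t" "0 < t"
      using nearest_point_decomp[OF wx] by metis
    hence l: "0 < l1dist x (Zset B w)" by simp
    have "facial_distance B \<le> face_gap B F"
      using F(1) \<open>finite G\<close> by (auto simp: facial_distance_eq_Inf G_def intro: cInf_lower bdd_below_finite)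
    moreover have "0 \<le> facial_distance B" by (simp add: F0(2) face_gap_def setdist_pos_le)
    ultimately have "(facial_distance B * l1dist x (Zset B w))^2 \<le> (2 * norm (B *v x - w))^2"
      using F(2) l by (intro power_mono) (auto intro: order_trans[OF mult_right_mono])
    thus ?thesis using l by (simp add: r field_simps power_mult_distrib)
  qed
  moreover have "(facial_distance B)^2 / 4 \<in> euclidean_ratio_set B"
    using face_gap_in_euclidean_ratio_set[OF F0(1)] by (simp add: F0(2))
  ultimately show ?thesis by (intro cInf_eq_minimum) auto
qed

theorem corollary1:
  fixes Q :: "real^'m^'m" and b :: "real^'m" and A :: "real^'n^'m"
  assumes "sym_pos_def Q"
    and "\<exists>i j. column i A \<noteq> column j A"
  defines "f \<equiv> (\<lambda>u. (1/2) * ((Q *v u) \<bullet> u) + b \<bullet> u)"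
  shows "Lrel f A = (mdiam (msqrt Q ** A))^2 / 4
    \<and> murel f A = (facial_distance (msqrt Q ** A))^2 / 4
    \<and> Lrel f A / murel f A = (mdiam (msqrt Q ** A))^2 / (facial_distance (msqrt Q ** A))^2"
proof -
  define S where "S = msqrt Q"
  have S: "transpose S = S" "S ** S = Q" using msqrt_sym_pos_def[OF assms(1)] by (simp_all add: S_def)
  have ratio: "ratio_set f A = euclidean_ratio_set (S ** A)"
    unfolding f_def by (rule ratio_set_quadratic[OF assms(1) S])
  have "\<exists>i j. column i (S ** A) \<noteq> column j (S ** A)"
    using assms(2) sym_pos_def_square_root_inj[OF assms(1) S(2)] by (simp add: column_matrix_mult)
  hence L: "Lrel f A = (mdiam (S ** A))^2 / 4" and M: "murel f A = (facial_distance (S ** A))^2 / 4"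
    by (simp_all add: Lrel_def murel_def ratio Sup_euclidean_ratio_set Inf_euclidean_ratio_set)
  moreover have "Lrel f A / murel f A = (mdiam (S ** A))^2 / (facial_distance (S ** A))^2"
    unfolding L M by simp
  ultimately show ?thesis unfolding S_def by blast
qed

end
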